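(* Let $k\ge 4$ be an integer, let $G'$ be an acyclic oriented graph with no directed path with $k$ arcs, and let $W$ be an oriented path in $G'$. Then: (1) if $W$ has exactly $kn$ arcs for some positive integer $n$, then $|W^+|\le (k-1)n$ and $|W^-|\ge n$; (2) if the final arc of $W$ is a backward arc, then there is a positive integer $n$ such that $|W^+|\le (k-1)n$ and $|W^-|\ge n$.
   Context: An oriented path $W=w_1w_2\cdots w_t$ in $G'$ is a path in the underlying graph of $G'$ traversed from $w_1$ to $w_t$; an arc of $G'$ between consecutive vertices $w_i,w_{i+1}$ is a forward arc of $W$ if it is $(w_i,w_{i+1})$ and a backward arc if it is $(w_{i+1},w_i)$. $W^+$ and $W^-$ denote the sets of forward and backward arcs of $W$, respectively; the final arc is the one between $w_{t-1}$ and $w_t$. *)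

theory Defs
  imports Main
begin

definition oriented_graph :: "'a set \<Rightarrow> ('a \<times> 'a) set \<Rightarrow> bool" where
  "oriented_graph V A \<longleftrightarrow> A \<subseteq> V \<times> V \<and> (\<forall>u v. (u, v) \<in> A \<longrightarrow> (v, u) \<notin> A)"

text \<open>A directed path, given by its vertex list (distinct vertices, consecutive ones joined
  by an arc in the forward direction). It has length ps - 1 arcs.\<close>
definition directed_path :: "('a \<times> 'a) set \<Rightarrow> 'a list \<Rightarrow> bool" where
  "directed_path A ps \<longleftrightarrow> ps \<noteq> [] \<and> distinct ps \<and>
     (\<forall>i. Suc i < length ps \<longrightarrow> (ps ! i, ps ! Suc i) \<in> A)"

definition oriented_path :: "'a set \<Rightarrow> ('a \<times> 'a) set \<Rightarrow> 'a list \<Rightarrow> bool" where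
  "oriented_path V A W \<longleftrightarrow> W \<noteq> [] \<and> distinct W \<and> set W \<subseteq> V \<and>
     (\<forall>i. Suc i < length W \<longrightarrow> (W ! i, W ! Suc i) \<in> A \<or> (W ! Suc i, W ! i) \<in> A)"

definition fwd_arcs :: "('a \<times> 'a) set \<Rightarrow> 'a list \<Rightarrow> ('a \<times> 'a) set" where
  "fwd_arcs A W = {(W ! i, W ! Suc i) | i. Suc i < length W \<and> (W ! i, W ! Suc i) \<in> A}"

definition bwd_arcs :: "('a \<times> 'a) set \<Rightarrow> 'a list \<Rightarrow> ('a \<times> 'a) set" where
  "bwd_arcs A W = {(W ! Suc i, W ! i) | i. Suc i < length W \<and> (W ! Suc i, W ! i) \<in> A}"

definition num_arcs :: "'a list \<Rightarrow> nat" where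
  "num_arcs W = length W - 1"

definition final_arc_backward :: "('a \<times> 'a) set \<Rightarrow> 'a list \<Rightarrow> bool" where
  "final_arc_backward A W \<longleftrightarrow> 2 \<le> length W \<and> (last W, W ! (length W - 2)) \<in> A"

end

theory Submission
  imports Defs
begin

text \<open>Read the arcs of W in order as a word over bool, True for a forward arc and False for a
  backward one. Forward arcs at consecutive positions form a directed path, so the word has no
  run of k consecutive Trues. Hence every maximal block of Trues has fewer than k letters and,
  in a word of length k n, each of the n consecutive blocks of length k contains a False. If the
  word ends in a False, its Trues split into at most as many blocks as there are Falses.\<close>

definition no_true_run :: "nat \<Rightarrow> bool list \<Rightarrow> bool" where
  "no_true_run k bs \<longleftrightarrow> (\<forall>us vs. bs \<noteq> us @ replicate k True @ vs)"

lemma no_true_run_appendD1: "no_true_run k (xs @ ys) \<Longrightarrow> no_true_run k xs"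
  unfolding no_true_run_def by (metis append.assoc)

lemma no_true_run_appendD2: "no_true_run k (xs @ ys) \<Longrightarrow> no_true_run k ys"
  unfolding no_true_run_def by (metis append.assoc)

lemma no_true_run_all_True_length_less:
  assumes "no_true_run k bs" and "False \<notin> set bs"
  shows "length bs < k"
proof (rule ccontr)
  assume "\<not> length bs < k"
  have "\<forall>b\<in>set (take k bs). b = True"
    using \<open>False \<notin> set bs\<close> by (metis (full_types) in_set_takeD)
  then have "replicate (length (take k bs)) True = take k bs"
    by (rule replicate_length_same)
  then have "take k bs = replicate k True"
    using \<open>\<not> length bs < k\<close> by simp
  then have "bs = [] @ replicate k True @ drop k bs"
    using append_take_drop_id[of k bs] by simp
  then show False using assms(1) unfolding no_true_run_def by blast
qed

lemma count_list_True_add_False: "count_list bs True + count_list bs False = length bs"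
  by (induction bs) auto

lemma count_list_True_le_no_true_run:
  assumes "no_true_run k bs"
  shows "count_list bs True \<le> (k - 1) * (count_list bs False + 1)"
  using assms
proof (induction bs rule: length_induct)
  case (1 bs)
  show ?case
  proof (cases "False \<in> set bs")
    case True
    then obtain ys zs where bs: "bs = ys @ False # zs" and "False \<notin> set zs"
      using split_list_last by metis
    have "no_true_run k zs"
      using "1.prems" no_true_run_appendD2[of k "ys @ [False]" zs] unfolding bs by simp
    then have "length zs < k"
      using no_true_run_all_True_length_less \<open>False \<notin> set zs\<close> by blast
    moreover have "count_list zs True = length zs"
      using count_list_True_add_False[of zs] \<open>False \<notin> set zs\<close> by simp
    moreover have "count_list ys True \<le> (k - 1) * (count_list ys False + 1)"
    proof -
      have "no_true_run k ys" "length ys < length bs"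
        using "1.prems" no_true_run_appendD1 unfolding bs by auto
      with "1.IH" show ?thesis by blast
    qed
    ultimately have "count_list bs True \<le> (k - 1) * (count_list ys False + 1) + (k - 1)"
      unfolding bs by simp
    also have "\<dots> = (k - 1) * (count_list bs False + 1)"
      unfolding bs using \<open>False \<notin> set zs\<close> by simp
    finally show ?thesis .
  next
    case False
    then have "count_list bs True = length bs"
      using count_list_True_add_False[of bs] by simp
    moreover have "length bs < k"
      using no_true_run_all_True_length_less "1.prems" False by blast
    ultimately show ?thesis
      using False by simp
  qed
qed

lemma count_list_False_ge_no_true_run:
  assumes "no_true_run k bs" and "length bs = k * n"
  shows "n \<le> count_list bs False"
  using assms
proof (induction n arbitrary: bs)
  case 0
  then show ?case by simp
next
  case (Suc n)
  have split: "bs = take k bs @ drop k bs" by simp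
  have "no_true_run k (take k bs)" "no_true_run k (drop k bs)"
    using Suc.prems(1) no_true_run_appendD1[of k "take k bs" "drop k bs"]
      no_true_run_appendD2[of k "take k bs" "drop k bs"] by simp_all
  moreover have "length (take k bs) = k"
    using Suc.prems by simp
  ultimately have "False \<in> set (take k bs)"
    using no_true_run_all_True_length_less[of k "take k bs"] by auto
  then have "0 < count_list (take k bs) False"
    by (metis count_list_0_iff gr0I)
  moreover have "n \<le> count_list (drop k bs) False"
    using Suc.IH \<open>no_true_run k (drop k bs)\<close> Suc.prems(2) by simp
  moreover have "count_list bs False = count_list (take k bs) False + count_list (drop k bs) False"
    using count_list_append[of "take k bs" "drop k bs"] by simp
  ultimately show ?case by linarith
qed

lemma count_list_True_le_if_length_eq:
  assumes "no_true_run k bs" and "length bs = k * n"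
  shows "count_list bs True \<le> (k - 1) * n"
proof -
  have "count_list bs True = k * n - count_list bs False"
    using count_list_True_add_False[of bs] assms(2) by simp
  also have "\<dots> \<le> k * n - n"
    using count_list_False_ge_no_true_run[OF assms] by simp
  finally show ?thesis
    by (simp add: diff_mult_distrib)
qed

lemma count_list_True_le_if_last_False:
  assumes "no_true_run k (cs @ [False])"
  shows "count_list (cs @ [False]) True \<le> (k - 1) * count_list (cs @ [False]) False"
  using count_list_True_le_no_true_run[OF no_true_run_appendD1[OF assms]] by simp

definition arc_directions :: "('a \<times> 'a) set \<Rightarrow> 'a list \<Rightarrow> bool list" where
  "arc_directions A W = map (\<lambda>i. (W ! i, W ! Suc i) \<in> A) [0..<num_arcs W]"

lemma length_arc_directions [simp]: "length (arc_directions A W) = num_arcs W"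
  by (simp add: arc_directions_def)

lemma nth_arc_directions:
  "i < num_arcs W \<Longrightarrow> arc_directions A W ! i = ((W ! i, W ! Suc i) \<in> A)"
  by (simp add: arc_directions_def)

lemma count_list_conv_card_nth:
  "count_list xs x = card {i. i < length xs \<and> xs ! i = x}"
  by (simp add: count_list_eq_length_filter length_filter_conv_card eq_commute)

lemma count_list_arc_directions:
  "count_list (arc_directions A W) b = card {i. Suc i < length W \<and> ((W ! i, W ! Suc i) \<in> A) = b}"
  unfolding count_list_conv_card_nth
  by (rule arg_cong[where f = card]) (auto simp: arc_directions_def num_arcs_def)

lemma oriented_path_backward_iff_not_forward:
  assumes "oriented_graph V A" and "oriented_path V A W" and "Suc i < length W"
  shows "(W ! Suc i, W ! i) \<in> A \<longleftrightarrow> (W ! i, W ! Suc i) \<notin> A"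
  using assms unfolding oriented_graph_def oriented_path_def by blast

lemma card_fwd_arcs:
  assumes "distinct W"
  shows "card (fwd_arcs A W) = count_list (arc_directions A W) True"
proof -
  let ?I = "{i. Suc i < length W \<and> (W ! i, W ! Suc i) \<in> A}"
  have "fwd_arcs A W = (\<lambda>i. (W ! i, W ! Suc i)) ` ?I"
    unfolding fwd_arcs_def by blast
  moreover have "inj_on (\<lambda>i. (W ! i, W ! Suc i)) ?I"
    using assms by (intro inj_onI) (auto simp: nth_eq_iff_index_eq)
  ultimately show ?thesis
    by (simp add: card_image count_list_arc_directions)
qed

lemma card_bwd_arcs:
  assumes "oriented_graph V A" and "oriented_path V A W"
  shows "card (bwd_arcs A W) = count_list (arc_directions A W) False"
proof -
  let ?I = "{i. Suc i < length W \<and> (W ! i, W ! Suc i) \<notin> A}"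
  have "bwd_arcs A W = (\<lambda>i. (W ! Suc i, W ! i)) ` ?I"
    unfolding bwd_arcs_def using oriented_path_backward_iff_not_forward[OF assms] by blast
  moreover have "inj_on (\<lambda>i. (W ! Suc i, W ! i)) ?I"
    using assms(2) unfolding oriented_path_def
    by (intro inj_onI) (auto simp: nth_eq_iff_index_eq)
  ultimately show ?thesis
    by (simp add: card_image count_list_arc_directions)
qed

lemma directed_path_take_drop:
  assumes "distinct W" and "j + k < length W"
    and "\<And>i. i < k \<Longrightarrow> (W ! (j + i), W ! Suc (j + i)) \<in> A"
  shows "directed_path A (take (Suc k) (drop j W))"
  unfolding directed_path_def
proof (intro conjI allI impI)
  show "take (Suc k) (drop j W) \<noteq> []" "distinct (take (Suc k) (drop j W))"
    using assms(1,2) by (simp_all add: distinct_take distinct_drop)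
  fix i assume "Suc i < length (take (Suc k) (drop j W))"
  then have "i < k" using assms(2) by simp
  then show "(take (Suc k) (drop j W) ! i, take (Suc k) (drop j W) ! Suc i) \<in> A"
    using assms(2,3) by simp
qed

lemma no_true_run_arc_directions:
  assumes "W \<noteq> []" and "distinct W" and "\<not> (\<exists>ps. directed_path A ps \<and> length ps = k + 1)"
  shows "no_true_run k (arc_directions A W)"
  unfolding no_true_run_def
proof (intro allI notI)
  fix us vs assume run: "arc_directions A W = us @ replicate k True @ vs"
  define j where "j = length us"
  have "j + k \<le> num_arcs W"
    using arg_cong[OF run, of length] unfolding j_def by simp
  then have "j + k < length W"
    using assms(1) unfolding num_arcs_def by (cases W) auto
  moreover have "(W ! (j + i), W ! Suc (j + i)) \<in> A" if "i < k" for i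
  proof -
    have "arc_directions A W ! (j + i)"
      using run that unfolding j_def by (simp add: nth_append)
    moreover have "j + i < num_arcs W"
      using \<open>j + k \<le> num_arcs W\<close> that by simp
    ultimately show ?thesis
      by (simp add: nth_arc_directions)
  qed
  ultimately have "directed_path A (take (Suc k) (drop j W))"
    using directed_path_take_drop assms(2) by blast
  moreover have "length (take (Suc k) (drop j W)) = k + 1"
    using \<open>j + k < length W\<close> by simp
  ultimately show False
    using assms(3) by blast
qed

lemma arc_directions_snoc_False:
  assumes "oriented_graph V A" and "final_arc_backward A W"
  shows "\<exists>cs. arc_directions A W = cs @ [False]"
proof -
  obtain m where m: "length W = Suc (Suc m)"
    using assms(2) unfolding final_arc_backward_def by (metis add_2_eq_Suc le_Suc_ex)
  have "last W = W ! Suc m"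
    using m by (metis diff_Suc_1 last_conv_nth list.size(3) nat.distinct(1))
  then have "(W ! Suc m, W ! m) \<in> A"
    using assms(2) m unfolding final_arc_backward_def by simp
  then have "(W ! m, W ! Suc m) \<notin> A"
    using assms(1) unfolding oriented_graph_def by blast
  then have "arc_directions A W = map (\<lambda>i. (W ! i, W ! Suc i) \<in> A) [0..<m] @ [False]"
    using m by (simp add: arc_directions_def num_arcs_def)
  then show ?thesis ..
qed

theorem lemma2:
  fixes V :: "'a set" and A :: "('a \<times> 'a) set" and W :: "'a list" and k :: nat
  assumes "4 \<le> k"
    and "finite V"
    and "oriented_graph V A"
    and "acyclic A"
    and "\<not> (\<exists>ps. directed_path A ps \<and> length ps = k + 1)"
    and "oriented_path V A W"
  shows "(\<forall>n::nat. 0 < n \<and> num_arcs W = k * n \<longrightarrow>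
             card (fwd_arcs A W) \<le> (k - 1) * n \<and> n \<le> card (bwd_arcs A W))
       \<and> (final_arc_backward A W \<longrightarrow>
             (\<exists>n::nat. 0 < n \<and> card (fwd_arcs A W) \<le> (k - 1) * n \<and> n \<le> card (bwd_arcs A W)))"
proof -
  let ?ds = "arc_directions A W"
  have "W \<noteq> []" and "distinct W"
    using assms(6) unfolding oriented_path_def by auto
  then have no_run: "no_true_run k ?ds"
    using no_true_run_arc_directions assms(5) by blast
  have fwd: "card (fwd_arcs A W) = count_list ?ds True"
    using card_fwd_arcs \<open>distinct W\<close> by blast
  have bwd: "card (bwd_arcs A W) = count_list ?ds False"
    using card_bwd_arcs assms(3,6) by blast
  have "card (fwd_arcs A W) \<le> (k - 1) * n \<and> n \<le> card (bwd_arcs A W)"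
    if "num_arcs W = k * n" for n
    using count_list_True_le_if_length_eq count_list_False_ge_no_true_run no_run that fwd bwd
    by simp
  moreover have "\<exists>n. 0 < n \<and> card (fwd_arcs A W) \<le> (k - 1) * n \<and> n \<le> card (bwd_arcs A W)"
    if final: "final_arc_backward A W"
  proof -
    obtain cs where ds: "?ds = cs @ [False]"
      using arc_directions_snoc_False assms(3) final by blast
    show ?thesis
      using count_list_True_le_if_last_False[of k cs] no_run fwd bwd
      unfolding ds by (intro exI[of _ "card (bwd_arcs A W)"]) simp
  qed
  ultimately show ?thesis by blast
qed

end
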